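(* Let $\operatorname{Erf}(\xi)=\int_0^\xi e^{-x^2}\,dx$ and $n,m\in\mathbb{N}_0$. There are polynomials $p^*_{n,m},q^*_{n,m}\in\mathbb{Q}[x,y]$ with \[ \iint x^ny^m(x-y)e^{-(x-y)^2}\,dx\,dy=p^*_{n,m}(x,y)e^{-(x-y)^2}+q^*_{n,m}(x,y)\operatorname{Erf}(x-y) \] (i.e. $\partial_x\partial_y$ of the right-hand side equals $x^ny^m(x-y)e^{-(x-y)^2}$), such that $p^*_{n,m}$ has degree $n+m-1$ and $q^*_{n,m}$ has degree $n+m$.
   Context: A polynomial of negative degree means the zero polynomial. *)

theory Defs
  imports "HOL-Analysis.Analysis"
begin

text \<open>Bivariate polynomials over the rationals, represented by their coefficient
  function (coefficient of x^i y^j at (i,j)); a genuine polynomial has finite support.\<close>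
type_synonym bipoly = "nat \<times> nat \<Rightarrow> rat"

definition bipoly :: "bipoly \<Rightarrow> bool" where
  "bipoly p \<longleftrightarrow> finite {ij. p ij \<noteq> 0}"

definition bipoly_eval :: "bipoly \<Rightarrow> real \<Rightarrow> real \<Rightarrow> real" where
  "bipoly_eval p x y = (\<Sum>ij\<in>{ij. p ij \<noteq> 0}. of_rat (p ij) * x ^ fst ij * y ^ snd ij)"

definition tdeg :: "bipoly \<Rightarrow> int" where
  "tdeg p = (if (\<forall>ij. p ij = 0) then -1 else int (Max {fst ij + snd ij | ij. p ij \<noteq> 0}))"

definition Erf :: "real \<Rightarrow> real" where
  "Erf \<xi> = (LBINT x=ereal 0..ereal \<xi>. exp (- (x^2)))"

end

(* Write e = exp(-(x-y)^2) and F = P e + Q Erf(x-y) with polynomials P, Q. The partial derivatives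
   of F have the same shape:
     d/dx F = (P_x - 2(x-y) P + Q) e + Q_x Erf(x-y),   d/dy F = (P_y + 2(x-y) P - Q) e + Q_y Erf(x-y).
   So it suffices to find R and beta(y) with R_x - 2(x-y) R + beta = (x-y) x^n y^m, and then P and
   Q = alpha(x) + b(y) with b' = beta and P_y + 2(x-y) P - alpha = R + b. Both linear equations are
   solved degree by degree from the top: a form of degree d+1 minus the right multiple of y^(d+1)
   (resp. x^(d+1)) has coefficient sum 0, i.e. vanishes on x = y, so it is (x-y) times a form of
   degree d. Following the top coefficients through the construction gives the exact degrees; with
   N = n + m, the coefficients of x^N and y^N in Q are m/(2N) and n/(2N). *)

theory Submission
  imports Defs "HOL-Library.Function_Algebras"
begin

definition pderiv_x :: "bipoly \<Rightarrow> bipoly" where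
  "pderiv_x p = (\<lambda>(i, j). of_nat (Suc i) * p (Suc i, j))"

definition pderiv_y :: "bipoly \<Rightarrow> bipoly" where
  "pderiv_y p = (\<lambda>(i, j). of_nat (Suc j) * p (i, Suc j))"

definition antideriv_y :: "bipoly \<Rightarrow> bipoly" where
  "antideriv_y p = (\<lambda>(i, j). if j = 0 then 0 else p (i, j - 1) / of_nat j)"

definition swap_vars :: "bipoly \<Rightarrow> bipoly" where
  "swap_vars p = (\<lambda>(i, j). p (j, i))"

definition mult_x :: "bipoly \<Rightarrow> bipoly" where
  "mult_x p = (\<lambda>(i, j). if i = 0 then 0 else p (i - 1, j))"

definition mult_y :: "bipoly \<Rightarrow> bipoly" where
  "mult_y p = (\<lambda>(i, j). if j = 0 then 0 else p (i, j - 1))"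

definition mult_x_minus_y :: "bipoly \<Rightarrow> bipoly" where
  "mult_x_minus_y p = mult_x p - mult_y p"

definition bimonom :: "nat \<Rightarrow> nat \<Rightarrow> rat \<Rightarrow> bipoly" where
  "bimonom a b r = (\<lambda>(i, j). if i = a \<and> j = b then r else 0)"

lemma swap_vars_swap_vars [simp]: "swap_vars (swap_vars p) = p"
  by (simp add: swap_vars_def)

lemma mult_y_eq_swap: "mult_y p = swap_vars (mult_x (swap_vars p))"
  by (auto simp: mult_y_def mult_x_def swap_vars_def fun_eq_iff)

lemma pderiv_y_eq_swap: "pderiv_y p = swap_vars (pderiv_x (swap_vars p))"
  by (auto simp: pderiv_y_def pderiv_x_def swap_vars_def fun_eq_iff)

lemma pderiv_y_add: "pderiv_y (p + q) = pderiv_y p + pderiv_y q"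
  by (auto simp: pderiv_y_def fun_eq_iff algebra_simps)

lemma pderiv_y_antideriv_y: "pderiv_y (antideriv_y p) = p"
  by (auto simp: pderiv_y_def antideriv_y_def fun_eq_iff)

subsection \<open>Evaluation\<close>

lemma bipoly_eval_superset:
  assumes "finite A" "{ij. p ij \<noteq> 0} \<subseteq> A"
  shows "bipoly_eval p x y = (\<Sum>ij\<in>A. of_rat (p ij) * x ^ fst ij * y ^ snd ij)"
  unfolding bipoly_eval_def by (rule sum.mono_neutral_left) (use assms in auto)

lemma bipoly_zero [simp]: "bipoly 0"
  by (simp add: bipoly_def)

lemma bipoly_eval_zero [simp]: "bipoly_eval 0 x y = 0"
  by (simp add: bipoly_eval_def)

lemma bipoly_add: "bipoly p \<Longrightarrow> bipoly q \<Longrightarrow> bipoly (p + q)"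
  unfolding bipoly_def by (rule finite_subset[of _ "{ij. p ij \<noteq> 0} \<union> {ij. q ij \<noteq> 0}"]) auto

lemma bipoly_scale: "bipoly p \<Longrightarrow> bipoly (\<lambda>ij. r * p ij)"
  unfolding bipoly_def by (rule finite_subset[of _ "{ij. p ij \<noteq> 0}"]) auto

lemma bipoly_uminus: "bipoly p \<Longrightarrow> bipoly (- p)"
  using bipoly_scale[of p "-1"] by (simp add: fun_Compl_def)

lemma bipoly_diff: "bipoly p \<Longrightarrow> bipoly q \<Longrightarrow> bipoly (p - q)"
  unfolding diff_conv_add_uminus by (intro bipoly_add bipoly_uminus)

lemma bipoly_numeral_mult: "bipoly p \<Longrightarrow> bipoly (numeral k * p)"
  using bipoly_scale[of p "numeral k"] by (simp add: times_fun_def)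

lemma bipoly_eval_add:
  assumes "bipoly p" "bipoly q"
  shows "bipoly_eval (p + q) x y = bipoly_eval p x y + bipoly_eval q x y"
proof -
  let ?A = "{ij. p ij \<noteq> 0} \<union> {ij. q ij \<noteq> 0}"
  have "finite ?A"
    using assms by (simp add: bipoly_def)
  then show ?thesis
    by (subst (1 2 3) bipoly_eval_superset[of ?A]) (auto simp: of_rat_add distrib_right sum.distrib)
qed

lemma bipoly_eval_scale:
  assumes "bipoly p"
  shows "bipoly_eval (\<lambda>ij. r * p ij) x y = of_rat r * bipoly_eval p x y"
proof -
  let ?A = "{ij. p ij \<noteq> 0}"
  have "finite ?A"
    using assms by (simp add: bipoly_def)
  then show ?thesis
    by (subst (1 2) bipoly_eval_superset[of ?A]) (auto simp: of_rat_mult sum_distrib_left mult.assoc)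
qed

lemma bipoly_eval_numeral_mult:
  "bipoly p \<Longrightarrow> bipoly_eval (numeral k * p) x y = numeral k * bipoly_eval p x y"
  using bipoly_eval_scale[of p "numeral k"] by (simp add: times_fun_def)

lemma bipoly_eval_uminus: "bipoly p \<Longrightarrow> bipoly_eval (- p) x y = - bipoly_eval p x y"
  using bipoly_eval_scale[of p "-1"] by (simp add: fun_Compl_def)

lemma bipoly_eval_diff:
  "bipoly p \<Longrightarrow> bipoly q \<Longrightarrow> bipoly_eval (p - q) x y = bipoly_eval p x y - bipoly_eval q x y"
  using bipoly_eval_add[OF _ bipoly_uminus, of p q x y] by (simp add: bipoly_eval_uminus)

lemma support_swap_vars: "{ij. swap_vars p ij \<noteq> 0} = prod.swap ` {ij. p ij \<noteq> 0}"
  by (auto simp: swap_vars_def image_iff)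

lemma bipoly_swap_vars: "bipoly p \<Longrightarrow> bipoly (swap_vars p)"
  unfolding bipoly_def support_swap_vars by simp

lemma bipoly_eval_swap_vars: "bipoly_eval (swap_vars p) x y = bipoly_eval p y x"
  unfolding bipoly_eval_def support_swap_vars
  by (subst sum.reindex) (auto simp: swap_vars_def mult_ac intro!: sum.cong)

lemma bipoly_mult_x: "bipoly p \<Longrightarrow> bipoly (mult_x p)"
  unfolding bipoly_def
  by (rule finite_subset[of _ "apfst Suc ` {ij. p ij \<noteq> 0}"])
     (auto simp: mult_x_def image_iff apfst_def map_prod_def split: if_splits intro!: exI[of _ "_ - 1"])

lemma bipoly_eval_mult_x:
  assumes "bipoly p"
  shows "bipoly_eval (mult_x p) x y = x * bipoly_eval p x y"
proof -
  let ?A = "apfst Suc ` {ij. p ij \<noteq> 0}"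
  have "finite ?A"
    using assms by (simp add: bipoly_def)
  moreover have "{ij. mult_x p ij \<noteq> 0} \<subseteq> ?A"
    by (auto simp: mult_x_def image_iff apfst_def map_prod_def split: if_splits intro!: exI[of _ "_ - 1"])
  moreover have "inj_on (apfst Suc) B" for B :: "(nat \<times> nat) set"
    by (auto simp: inj_on_def apfst_def map_prod_def)
  ultimately show ?thesis
    by (simp add: bipoly_eval_superset sum.reindex)
       (simp add: mult_x_def bipoly_eval_def sum_distrib_left mult_ac apfst_def map_prod_def split_def)
qed

lemma bipoly_mult_y: "bipoly p \<Longrightarrow> bipoly (mult_y p)"
  by (simp add: mult_y_eq_swap bipoly_swap_vars bipoly_mult_x)

lemma bipoly_eval_mult_y: "bipoly p \<Longrightarrow> bipoly_eval (mult_y p) x y = y * bipoly_eval p x y"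
  by (simp add: mult_y_eq_swap bipoly_eval_swap_vars bipoly_swap_vars bipoly_eval_mult_x)

lemma bipoly_mult_x_minus_y: "bipoly p \<Longrightarrow> bipoly (mult_x_minus_y p)"
  unfolding mult_x_minus_y_def by (intro bipoly_diff bipoly_mult_x bipoly_mult_y)

lemma bipoly_eval_mult_x_minus_y:
  "bipoly p \<Longrightarrow> bipoly_eval (mult_x_minus_y p) x y = (x - y) * bipoly_eval p x y"
  by (simp add: mult_x_minus_y_def bipoly_eval_diff bipoly_mult_x bipoly_mult_y
      bipoly_eval_mult_x bipoly_eval_mult_y left_diff_distrib)

lemma bipoly_bimonom: "bipoly (bimonom a b r)"
  unfolding bipoly_def by (rule finite_subset[of _ "{(a, b)}"]) (auto simp: bimonom_def split: if_splits)

lemma bipoly_eval_bimonom: "bipoly_eval (bimonom a b r) x y = of_rat r * x ^ a * y ^ b"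
  by (subst bipoly_eval_superset[of "{(a, b)}"]) (auto simp: bimonom_def split: if_splits)

subsection \<open>Derivatives\<close>

lemma bipoly_pderiv_x: "bipoly p \<Longrightarrow> bipoly (pderiv_x p)"
  unfolding bipoly_def
  by (rule finite_subset[of _ "apfst (\<lambda>i. i - 1) ` {ij. p ij \<noteq> 0}"])
     (auto simp: pderiv_x_def image_iff apfst_def map_prod_def intro!: exI[of _ "Suc _"])

lemma bipoly_pderiv_y: "bipoly p \<Longrightarrow> bipoly (pderiv_y p)"
  by (simp add: pderiv_y_eq_swap bipoly_swap_vars bipoly_pderiv_x)

lemma bipoly_eval_pderiv_x:
  assumes "bipoly p"
  shows "bipoly_eval (pderiv_x p) x y =
    (\<Sum>ij | p ij \<noteq> 0. of_rat (p ij) * (of_nat (fst ij) * x ^ (fst ij - 1)) * y ^ snd ij)"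
proof -
  let ?S = "{ij. p ij \<noteq> 0}"
  let ?S' = "?S \<inter> {ij. 0 < fst ij}"
  let ?f = "\<lambda>(i :: nat, j :: nat). (i - 1, j)"
  have fin: "finite ?S"
    using assms by (simp add: bipoly_def)
  have "{ij. pderiv_x p ij \<noteq> 0} \<subseteq> ?f ` ?S'"
    by (auto simp: pderiv_x_def image_iff intro!: bexI[of _ "(Suc _, _)"])
  then have "bipoly_eval (pderiv_x p) x y =
      (\<Sum>ij\<in>?f ` ?S'. of_rat (pderiv_x p ij) * x ^ fst ij * y ^ snd ij)"
    using fin by (intro bipoly_eval_superset) auto
  also have "\<dots> = (\<Sum>ij\<in>?S'. of_rat (p ij) * (of_nat (fst ij) * x ^ (fst ij - 1)) * y ^ snd ij)"
    by (subst sum.reindex) (auto simp: inj_on_def pderiv_x_def of_rat_mult mult_ac intro!: sum.cong)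
  also have "\<dots> = (\<Sum>ij\<in>?S. of_rat (p ij) * (of_nat (fst ij) * x ^ (fst ij - 1)) * y ^ snd ij)"
    by (rule sum.mono_neutral_left) (use fin in auto)
  finally show ?thesis .
qed

lemma bipoly_eval_DERIV_x:
  assumes "bipoly p"
  shows "((\<lambda>x. bipoly_eval p x y) has_real_derivative bipoly_eval (pderiv_x p) x y) (at x)"
  unfolding bipoly_eval_pderiv_x[OF assms] unfolding bipoly_eval_def
  by (intro DERIV_sum DERIV_cmult_right DERIV_cmult) (metis DERIV_pow One_nat_def)

lemma bipoly_eval_DERIV_y:
  assumes "bipoly p"
  shows "((\<lambda>y. bipoly_eval p x y) has_real_derivative bipoly_eval (pderiv_y p) x y) (at y)"
  using bipoly_eval_DERIV_x[OF bipoly_swap_vars[OF assms], of x y]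
  by (simp add: pderiv_y_eq_swap bipoly_eval_swap_vars)

lemma DERIV_Erf: "(Erf has_real_derivative exp (- (\<xi>^2))) (at \<xi>)"
proof -
  define a where "a = min \<xi> 0 - 1"
  define b where "b = max \<xi> 0 + 1"
  have "continuous_on {a..b} (\<lambda>x::real. exp (- (x^2)))"
    by (intro continuous_intros)
  then have "(Erf has_vector_derivative exp (- (\<xi>^2))) (at \<xi> within {a..b})"
    unfolding Erf_def[abs_def] by (intro interval_integral_FTC2[of a 0 b]) (auto simp: a_def b_def)
  then have "(Erf has_vector_derivative exp (- (\<xi>^2))) (at \<xi> within {a<..<b})"
    by (rule has_vector_derivative_within_subset) auto
  then show ?thesis
    by (subst (asm) has_vector_derivative_within_open)
       (auto simp: a_def b_def has_real_derivative_iff_has_vector_derivative)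
qed

definition erf_form :: "bipoly \<Rightarrow> bipoly \<Rightarrow> real \<Rightarrow> real \<Rightarrow> real" where
  "erf_form P Q x y = bipoly_eval P x y * exp (- ((x - y)^2)) + bipoly_eval Q x y * Erf (x - y)"

definition exp_part_dx :: "bipoly \<Rightarrow> bipoly \<Rightarrow> bipoly" where
  "exp_part_dx P Q = pderiv_x P - 2 * mult_x_minus_y P + Q"

definition exp_part_dy :: "bipoly \<Rightarrow> bipoly \<Rightarrow> bipoly" where
  "exp_part_dy P Q = pderiv_y P + 2 * mult_x_minus_y P - Q"

lemma bipoly_exp_part_dy: "bipoly P \<Longrightarrow> bipoly Q \<Longrightarrow> bipoly (exp_part_dy P Q)"
  unfolding exp_part_dy_def
  by (intro bipoly_add bipoly_diff bipoly_numeral_mult bipoly_pderiv_y bipoly_mult_x_minus_y)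

lemma bipoly_eval_exp_part_dx:
  assumes "bipoly P" "bipoly Q"
  shows "bipoly_eval (exp_part_dx P Q) x y =
    bipoly_eval (pderiv_x P) x y - 2 * (x - y) * bipoly_eval P x y + bipoly_eval Q x y"
  using assms unfolding exp_part_dx_def
  by (simp add: bipoly_eval_add bipoly_eval_diff bipoly_eval_numeral_mult bipoly_eval_mult_x_minus_y
      bipoly_diff bipoly_pderiv_x bipoly_numeral_mult bipoly_mult_x_minus_y)

lemma bipoly_eval_exp_part_dy:
  assumes "bipoly P" "bipoly Q"
  shows "bipoly_eval (exp_part_dy P Q) x y =
    bipoly_eval (pderiv_y P) x y + 2 * (x - y) * bipoly_eval P x y - bipoly_eval Q x y"
  using assms unfolding exp_part_dy_def
  by (simp add: bipoly_eval_add bipoly_eval_diff bipoly_eval_numeral_mult bipoly_eval_mult_x_minus_y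
      bipoly_add bipoly_pderiv_y bipoly_numeral_mult bipoly_mult_x_minus_y)

lemma erf_form_DERIV_x:
  assumes "bipoly P" "bipoly Q"
  shows "((\<lambda>x. erf_form P Q x y) has_real_derivative erf_form (exp_part_dx P Q) (pderiv_x Q) x y) (at x)"
proof -
  have "((\<lambda>x. exp (- ((x - y)^2))) has_real_derivative exp (- ((x - y)^2)) * (- 2 * (x - y))) (at x)"
    by (auto intro!: derivative_eq_intros simp: algebra_simps)
  moreover have "((\<lambda>x. Erf (x - y)) has_real_derivative exp (- ((x - y)^2)) * 1) (at x)"
    by (rule DERIV_chain2[OF DERIV_Erf]) (auto intro!: derivative_eq_intros)
  ultimately show ?thesis
    unfolding erf_form_def
    by (rule DERIV_cong[OF DERIV_add[OF DERIV_mult[OF bipoly_eval_DERIV_x[OF assms(1)]]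
          DERIV_mult[OF bipoly_eval_DERIV_x[OF assms(2)]]]])
       (simp add: bipoly_eval_exp_part_dx assms algebra_simps)
qed

lemma erf_form_DERIV_y:
  assumes "bipoly P" "bipoly Q"
  shows "((\<lambda>y. erf_form P Q x y) has_real_derivative erf_form (exp_part_dy P Q) (pderiv_y Q) x y) (at y)"
proof -
  have "((\<lambda>y. exp (- ((x - y)^2))) has_real_derivative exp (- ((x - y)^2)) * (2 * (x - y))) (at y)"
    by (auto intro!: derivative_eq_intros simp: algebra_simps)
  moreover have "((\<lambda>y. Erf (x - y)) has_real_derivative exp (- ((x - y)^2)) * (- 1)) (at y)"
    by (rule DERIV_chain2[OF DERIV_Erf]) (auto intro!: derivative_eq_intros)
  ultimately show ?thesis
    unfolding erf_form_def
    by (rule DERIV_cong[OF DERIV_add[OF DERIV_mult[OF bipoly_eval_DERIV_y[OF assms(1)]]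
          DERIV_mult[OF bipoly_eval_DERIV_y[OF assms(2)]]]])
       (simp add: bipoly_eval_exp_part_dy assms algebra_simps)
qed

subsection \<open>Degree bounds\<close>

definition deg_le :: "bipoly \<Rightarrow> int \<Rightarrow> bool" where
  "deg_le p d \<longleftrightarrow> (\<forall>i j. p (i, j) \<noteq> 0 \<longrightarrow> int (i + j) \<le> d)"

definition y_only :: "bipoly \<Rightarrow> bool" where
  "y_only p \<longleftrightarrow> (\<forall>i j. 0 < i \<longrightarrow> p (i, j) = 0)"

definition x_only :: "bipoly \<Rightarrow> bool" where
  "x_only p \<longleftrightarrow> (\<forall>i j. 0 < j \<longrightarrow> p (i, j) = 0)"

definition hom_coeff_sum :: "nat \<Rightarrow> bipoly \<Rightarrow> rat" where
  "hom_coeff_sum d p = (\<Sum>i\<le>d. p (i, d - i))"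

lemma deg_le_imp_bipoly:
  assumes "deg_le p d"
  shows "bipoly p"
  unfolding bipoly_def
proof (rule finite_subset)
  show "{ij. p ij \<noteq> 0} \<subseteq> {..nat d} \<times> {..nat d}"
    using assms by (force simp: deg_le_def)
qed simp

lemma tdeg_eqI:
  assumes "deg_le p (int d)" "p (i, j) \<noteq> 0" "i + j = d"
  shows "tdeg p = int d"
proof -
  have "finite {ij. p ij \<noteq> 0}"
    using deg_le_imp_bipoly[OF assms(1)] by (simp add: bipoly_def)
  moreover have "{fst ij + snd ij |ij. p ij \<noteq> 0} = (\<lambda>ij. fst ij + snd ij) ` {ij. p ij \<noteq> 0}"
    by blast
  ultimately have "finite {fst ij + snd ij |ij. p ij \<noteq> 0}"
    by simp
  then have "Max {fst ij + snd ij |ij. p ij \<noteq> 0} = d"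
    using assms by (intro Max_eqI) (force simp: deg_le_def)+
  then show ?thesis
    using assms(2) by (auto simp: tdeg_def)
qed

lemma deg_le_mono: "deg_le p d \<Longrightarrow> d \<le> e \<Longrightarrow> deg_le p e"
  by (force simp: deg_le_def)

lemma deg_le_add: "deg_le p d \<Longrightarrow> deg_le q d \<Longrightarrow> deg_le (p + q) d"
  by (force simp: deg_le_def)

lemma deg_le_uminus: "deg_le (- p) d = deg_le p d"
  by (simp add: deg_le_def)

lemma deg_le_swap_vars: "deg_le (swap_vars p) d = deg_le p d"
  unfolding deg_le_def swap_vars_def by (metis add.commute case_prod_conv)

lemma deg_le_pderiv_x: "deg_le p d \<Longrightarrow> deg_le (pderiv_x p) (d - 1)"
  by (force simp: deg_le_def pderiv_x_def)

lemma deg_le_bimonom: "deg_le (bimonom a b r) (int (a + b))"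
  by (simp add: deg_le_def bimonom_def)

lemma deg_le_coeff_eq_0: "deg_le p d \<Longrightarrow> d < int (i + j) \<Longrightarrow> p (i, j) = 0"
  by (force simp: deg_le_def)

lemma deg_le_antideriv_y: "deg_le p d \<Longrightarrow> deg_le (antideriv_y p) (d + 1)"
  by (force simp: deg_le_def antideriv_y_def)

lemma y_only_antideriv_y: "y_only p \<Longrightarrow> y_only (antideriv_y p)"
  by (simp add: y_only_def antideriv_y_def)

lemma pderiv_x_y_only: "y_only p \<Longrightarrow> pderiv_x p = 0"
  by (simp add: y_only_def pderiv_x_def fun_eq_iff)

lemma pderiv_y_x_only: "x_only p \<Longrightarrow> pderiv_y p = 0"
  by (simp add: x_only_def pderiv_y_def fun_eq_iff)

lemma hom_coeff_sum_add: "hom_coeff_sum d (p + q) = hom_coeff_sum d p + hom_coeff_sum d q"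
  by (simp add: hom_coeff_sum_def sum.distrib)

lemma hom_coeff_sum_swap_vars: "hom_coeff_sum d (swap_vars p) = hom_coeff_sum d p"
  unfolding hom_coeff_sum_def swap_vars_def
  by (rule sum.reindex_bij_witness[where i = "\<lambda>i. d - i" and j = "\<lambda>i. d - i"]) auto

lemma hom_coeff_sum_bimonom: "hom_coeff_sum (a + b) (bimonom a b r) = r"
  unfolding hom_coeff_sum_def bimonom_def
  by (subst sum.cong[OF refl, of _ _ "\<lambda>i. if i = a then r else 0"]) auto

lemma hom_coeff_sum_pderiv_x_bimonom:
  "hom_coeff_sum (a + b - 1) (pderiv_x (bimonom a b r)) = of_nat a * r"
proof -
  have "hom_coeff_sum (a + b - 1) (pderiv_x (bimonom a b r)) =
      (\<Sum>i\<le>a + b - 1. if 0 < a \<and> i = a - 1 then of_nat a * r else 0)"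
    unfolding hom_coeff_sum_def by (rule sum.cong) (auto simp: pderiv_x_def bimonom_def)
  then show ?thesis
    by (cases a) auto
qed

lemma hom_coeff_sum_y_only: "y_only p \<Longrightarrow> hom_coeff_sum d p = p (0, d)"
  unfolding hom_coeff_sum_def y_only_def by (subst sum.remove[of _ 0]) auto

lemma hom_coeff_sum_deg_le: "deg_le p e \<Longrightarrow> e < int d \<Longrightarrow> hom_coeff_sum d p = 0"
  unfolding hom_coeff_sum_def by (force intro!: sum.neutral deg_le_coeff_eq_0)

subsection \<open>Solving the coefficient equations\<close>

lemma exp_part_dx_add:
  "exp_part_dx (P + P') (Q + Q') = exp_part_dx P Q + exp_part_dx P' Q'"
  by (auto simp: exp_part_dx_def pderiv_x_def mult_x_minus_y_def mult_x_def mult_y_def fun_eq_iff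
      algebra_simps)

lemma exp_part_dx_0_left [simp]: "exp_part_dx 0 Q = Q"
  by (auto simp: exp_part_dx_def pderiv_x_def mult_x_minus_y_def mult_x_def mult_y_def fun_eq_iff)

lemma swap_vars_exp_part_dx:
  "swap_vars (exp_part_dx P Q) = exp_part_dy (swap_vars P) (- swap_vars Q)"
  by (auto simp: exp_part_dx_def exp_part_dy_def pderiv_x_def pderiv_y_def mult_x_minus_y_def
      mult_x_def mult_y_def swap_vars_def fun_eq_iff)

lemma exp_part_dy_add_right: "exp_part_dy P (Q + Q') = exp_part_dy P Q - Q'"
  by (simp add: exp_part_dy_def diff_diff_eq)

lemma exp_part_dy_coeff_0_Suc:
  assumes "deg_le P (int k)" "x_only \<alpha>"
  shows "exp_part_dy P \<alpha> (0, Suc k) = - 2 * P (0, k)"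
  using deg_le_coeff_eq_0[OF assms(1), of 0 "Suc (Suc k)"] assms(2)
  by (simp add: exp_part_dy_def pderiv_y_def mult_x_minus_y_def mult_x_def mult_y_def x_only_def)

text \<open>Exact division by \<open>x - y\<close> of a form of degree \<open>d + 1\<close> whose coefficients sum to zero.\<close>

lemma mult_x_minus_y_partial_sums:
  fixes a :: "nat \<Rightarrow> rat"
  assumes "(\<Sum>k\<le>Suc d. a k) = 0"
  shows "mult_x_minus_y (\<lambda>(i, j). if i + j = d then - (\<Sum>k\<le>i. a k) else 0) (i, j) =
    (if i + j = Suc d then a i else 0)"
proof (cases "i + j = Suc d")
  case True
  then consider "i = 0" | "j = 0" "i = Suc d" | i' j' where "i = Suc i'" "j = Suc j'"
    by (metis add_0_right not0_implies_Suc)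
  then show ?thesis
    by cases (use True assms in \<open>auto simp: mult_x_minus_y_def mult_x_def mult_y_def\<close>)
qed (auto simp: mult_x_minus_y_def mult_x_def mult_y_def)

lemma exp_part_dx_reduce_degree:
  assumes "deg_le c (int (Suc d))"
  obtains q where "deg_le q (int d)"
    "deg_le (c - exp_part_dx q (bimonom 0 (Suc d) (hom_coeff_sum (Suc d) c))) (int d)"
proof
  define s where "s = hom_coeff_sum (Suc d) c"
  \<comment> \<open>chosen so that \<open>-2 (x - y) q\<close> is the degree \<open>d + 1\<close> part of \<open>c - s y^(d+1)\<close>\<close>
  define a where "a k = ((if k = 0 then s else 0) - c (k, Suc d - k)) / 2" for k
  define q :: bipoly where "q = (\<lambda>(i, j). if i + j = d then - (\<Sum>k\<le>i. a k) else 0)"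
  show "deg_le q (int d)"
    by (simp add: deg_le_def q_def)
  have "(\<Sum>k\<le>Suc d. a k) = 0"
    unfolding a_def sum_divide_distrib[symmetric] sum_subtractf by (simp add: s_def hom_coeff_sum_def)
  then have tm: "mult_x_minus_y q (i, j) = (if i + j = Suc d then a i else 0)" for i j
    unfolding q_def by (rule mult_x_minus_y_partial_sums)
  have "(c - exp_part_dx q (bimonom 0 (Suc d) s)) (i, j) = 0" if "Suc d \<le> i + j" for i j
  proof -
    have pd: "pderiv_x q (i, j) = 0"
      using that by (simp add: pderiv_x_def q_def)
    show ?thesis
    proof (cases "i + j = Suc d")
      case True
      then have "j = Suc d - i"
        by simp
      with True pd show ?thesis
        by (auto simp: exp_part_dx_def tm bimonom_def a_def field_simps)
    next
      case False
      with that have "c (i, j) = 0"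
        by (intro deg_le_coeff_eq_0[OF assms]) simp
      with False pd show ?thesis
        by (simp add: exp_part_dx_def tm bimonom_def)
    qed
  qed
  then show "deg_le (c - exp_part_dx q (bimonom 0 (Suc d) (hom_coeff_sum (Suc d) c))) (int d)"
    unfolding deg_le_def s_def by (metis not_less_eq_eq of_nat_le_iff)
qed

lemma exp_part_dx_decomposition:
  assumes "deg_le c (int d)"
  shows "\<exists>R \<beta>. deg_le R (int d - 1) \<and> deg_le \<beta> (int d) \<and> y_only \<beta> \<and>
    exp_part_dx R \<beta> = c \<and> \<beta> (0, d) = hom_coeff_sum d c"
  using assms
proof (induction d arbitrary: c)
  case 0
  then have "y_only c"
    by (force simp: y_only_def deg_le_def)
  moreover have "deg_le 0 (int 0 - 1)"
    by (simp add: deg_le_def)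
  ultimately show ?case
    using 0 exp_part_dx_0_left[of c] unfolding hom_coeff_sum_def by fastforce
next
  case (Suc d)
  define m where "m = bimonom 0 (Suc d) (hom_coeff_sum (Suc d) c)"
  obtain q where q: "deg_le q (int d)" "deg_le (c - exp_part_dx q m) (int d)"
    using exp_part_dx_reduce_degree[OF Suc.prems] unfolding m_def by blast
  obtain R \<beta> where R: "deg_le R (int d - 1)" "deg_le \<beta> (int d)" "y_only \<beta>"
    "exp_part_dx R \<beta> = c - exp_part_dx q m"
    using Suc.IH[OF q(2)] by blast
  have "deg_le R (int d)"
    using R(1) by (rule deg_le_mono) simp
  then have Rq: "deg_le (R + q) (int (Suc d) - 1)"
    using q(1) by (simp add: deg_le_add)
  have "deg_le \<beta> (int (Suc d))"
    using R(2) by (rule deg_le_mono) simp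
  moreover have "deg_le m (int (Suc d))"
    using deg_le_bimonom[of 0 "Suc d"] by (simp add: m_def)
  ultimately have "deg_le (\<beta> + m) (int (Suc d))"
    by (rule deg_le_add)
  moreover have "y_only (\<beta> + m)"
    using R(3) by (simp add: y_only_def m_def bimonom_def)
  moreover have "exp_part_dx (R + q) (\<beta> + m) = c"
    by (simp add: exp_part_dx_add R(4))
  moreover have "(\<beta> + m) (0, Suc d) = hom_coeff_sum (Suc d) c"
    using deg_le_coeff_eq_0[OF R(2), of 0 "Suc d"] by (simp add: m_def bimonom_def)
  ultimately show ?case
    using Rq by blast
qed

lemma exp_part_dy_decomposition:
  assumes "deg_le c (int d)"
  shows "\<exists>P \<alpha>. deg_le P (int d - 1) \<and> deg_le \<alpha> (int d) \<and> x_only \<alpha> \<and>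
    exp_part_dy P \<alpha> = c \<and> \<alpha> (d, 0) = - hom_coeff_sum d c"
proof -
  obtain R \<beta> where R: "deg_le R (int d - 1)" "deg_le \<beta> (int d)" "y_only \<beta>"
    "exp_part_dx R \<beta> = swap_vars c" "\<beta> (0, d) = hom_coeff_sum d (swap_vars c)"
    using exp_part_dx_decomposition[of "swap_vars c" d] assms by (auto simp: deg_le_swap_vars)
  show ?thesis
  proof (intro exI conjI)
    show "deg_le (swap_vars R) (int d - 1)"
      using R(1) by (simp add: deg_le_swap_vars)
    show "deg_le (- swap_vars \<beta>) (int d)"
      using R(2) by (simp add: deg_le_uminus deg_le_swap_vars)
    show "x_only (- swap_vars \<beta>)"
      using R(3) by (simp add: x_only_def y_only_def swap_vars_def)
    show "exp_part_dy (swap_vars R) (- swap_vars \<beta>) = c"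
      by (simp flip: swap_vars_exp_part_dx add: R(4))
    show "(- swap_vars \<beta>) (d, 0) = - hom_coeff_sum d c"
      using R(5) hom_coeff_sum_swap_vars[of d c] by (simp add: swap_vars_def)
  qed
qed

lemma exp_part_dx_solve_target:
  assumes "n + m = Suc k"
  obtains R \<beta> where "deg_le R (int k)" "deg_le \<beta> (int k)" "y_only \<beta>" "\<beta> (0, k) = of_nat n / 2"
    "exp_part_dx (bimonom n m (- 1 / 2) + R) \<beta> = mult_x_minus_y (bimonom n m 1)"
proof -
  \<comment> \<open>\<open>exp_part_dx (-x^n y^m / 2) 0 = (x - y) x^n y^m - c\<close> leaves an equation of lower degree\<close>
  define c where "c = pderiv_x (bimonom n m (1 / 2))"
  have "deg_le c (int k)"
    using deg_le_pderiv_x[OF deg_le_bimonom[of n m "1 / 2"]] assms by (simp add: c_def)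
  then obtain R \<beta> where R: "deg_le R (int k - 1)" "deg_le \<beta> (int k)" "y_only \<beta>"
    "exp_part_dx R \<beta> = c" "\<beta> (0, k) = hom_coeff_sum k c"
    using exp_part_dx_decomposition by blast
  have "\<beta> (0, k) = of_nat n / 2"
    using R(5) hom_coeff_sum_pderiv_x_bimonom[of n m "1 / 2"] assms by (simp add: c_def)
  moreover have "deg_le R (int k)"
    using R(1) by (rule deg_le_mono) simp
  moreover have "exp_part_dx (bimonom n m (- 1 / 2) + R) (0 + \<beta>) =
      exp_part_dx (bimonom n m (- 1 / 2)) 0 + c"
    by (simp only: exp_part_dx_add R(4))
  moreover have "exp_part_dx (bimonom n m (- 1 / 2)) 0 + c = mult_x_minus_y (bimonom n m 1)"
    by (auto simp: fun_eq_iff c_def exp_part_dx_def pderiv_x_def mult_x_minus_y_def mult_x_def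
        mult_y_def bimonom_def)
  ultimately show ?thesis
    using that R(2,3) by simp
qed

lemma exp_part_dy_solve_target:
  assumes N: "n + m = Suc k" and R: "deg_le R (int k)"
    and \<beta>: "deg_le \<beta> (int k)" "y_only \<beta>" "\<beta> (0, k) = of_nat n / 2"
  obtains P Q where "deg_le P (int k)" "P (0, k) \<noteq> 0" "deg_le Q (int (Suc k))"
    "Q (0, Suc k) = of_nat n / (2 * of_nat (Suc k))" "Q (Suc k, 0) = of_nat m / (2 * of_nat (Suc k))"
    "exp_part_dy P Q = bimonom n m (- 1 / 2) + R" "pderiv_y Q = \<beta>"
proof -
  define b where "b = antideriv_y \<beta>"
  define c where "c = bimonom n m (- 1 / 2) + R + b"
  have b: "deg_le b (int (Suc k))" "y_only b" "b (0, Suc k) = of_nat n / (2 * of_nat (Suc k))"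
    using deg_le_antideriv_y[OF \<beta>(1)] y_only_antideriv_y[OF \<beta>(2)]
    by (simp_all add: b_def antideriv_y_def \<beta>(3) add.commute)
  have "deg_le (bimonom n m (- 1 / 2)) (int (Suc k))"
    using deg_le_bimonom[of n m] N by simp
  moreover have "deg_le R (int (Suc k))"
    using R by (rule deg_le_mono) simp
  ultimately have "deg_le c (int (Suc k))"
    unfolding c_def using b(1) by (intro deg_le_add)
  then obtain P \<alpha> where P: "deg_le P (int (Suc k) - 1)" "deg_le \<alpha> (int (Suc k))" "x_only \<alpha>"
    "exp_part_dy P \<alpha> = c" "\<alpha> (Suc k, 0) = - hom_coeff_sum (Suc k) c"
    using exp_part_dy_decomposition by blast
  have "hom_coeff_sum (Suc k) c = - 1 / 2 + of_nat n / (2 * of_nat (Suc k))"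
    using hom_coeff_sum_bimonom[of n m] hom_coeff_sum_deg_le[OF R] b(3) N
    by (simp add: c_def hom_coeff_sum_add hom_coeff_sum_y_only[OF b(2)])
  then have \<alpha>_top: "\<alpha> (Suc k, 0) = of_nat m / (2 * of_nat (Suc k))"
    using P(5) N by (simp add: field_simps flip: of_nat_add)
  have "exp_part_dy P \<alpha> (0, Suc k) = - 2 * P (0, k)"
    using P(1,3) by (simp add: exp_part_dy_coeff_0_Suc)
  moreover have "c (0, Suc k) \<noteq> 0"
    using deg_le_coeff_eq_0[OF R, of 0 "Suc k"] b(3) N
    by (auto simp: c_def bimonom_def)
  ultimately have "P (0, k) \<noteq> 0"
    using P(4) by auto
  show ?thesis
  proof (rule that[of P "\<alpha> + b"])
    show "deg_le P (int k)"
      using P(1) by simp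
    show "deg_le (\<alpha> + b) (int (Suc k))"
      using P(2) b(1) by (rule deg_le_add)
    show "(\<alpha> + b) (0, Suc k) = of_nat n / (2 * of_nat (Suc k))"
      using P(3) b(3) by (simp add: x_only_def)
    show "(\<alpha> + b) (Suc k, 0) = of_nat m / (2 * of_nat (Suc k))"
      using \<alpha>_top b(2) by (simp add: y_only_def)
    show "exp_part_dy P (\<alpha> + b) = bimonom n m (- 1 / 2) + R"
      using P(4) by (simp add: exp_part_dy_add_right c_def)
    show "pderiv_y (\<alpha> + b) = \<beta>"
      by (simp add: pderiv_y_add pderiv_y_x_only[OF P(3)] b_def pderiv_y_antideriv_y)
  qed fact
qed

lemma erf_double_antiderivative_coeffs:
  "\<exists>P Q. bipoly P \<and> bipoly Q \<and> tdeg P = int (n + m) - 1 \<and> tdeg Q = int (n + m) \<and>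
    exp_part_dx (exp_part_dy P Q) (pderiv_y Q) = mult_x_minus_y (bimonom n m 1) \<and>
    pderiv_x (pderiv_y Q) = 0"
proof (cases "n + m")
  case 0
  show ?thesis
  proof (intro exI conjI)
    show "bipoly (0 :: bipoly)" "bipoly (bimonom 0 0 (1 / 2))"
      by (simp_all add: bipoly_bimonom)
    show "tdeg (0 :: bipoly) = int (n + m) - 1"
      using 0 by (simp add: tdeg_def)
    show "tdeg (bimonom 0 0 (1 / 2)) = int (n + m)"
      using 0 deg_le_bimonom[of 0 0 "1 / 2"] by (intro tdeg_eqI[of _ _ 0 0]) (simp_all add: bimonom_def)
    show "exp_part_dx (exp_part_dy 0 (bimonom 0 0 (1 / 2))) (pderiv_y (bimonom 0 0 (1 / 2))) =
        mult_x_minus_y (bimonom n m 1)"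
      using 0 by (auto simp: fun_eq_iff exp_part_dx_def exp_part_dy_def pderiv_x_def pderiv_y_def
          mult_x_minus_y_def mult_x_def mult_y_def bimonom_def)
    show "pderiv_x (pderiv_y (bimonom 0 0 (1 / 2))) = 0"
      by (auto simp: fun_eq_iff pderiv_x_def pderiv_y_def bimonom_def)
  qed
next
  case (Suc k)
  obtain R \<beta> where R: "deg_le R (int k)" "deg_le \<beta> (int k)" "y_only \<beta>" "\<beta> (0, k) = of_nat n / 2"
    "exp_part_dx (bimonom n m (- 1 / 2) + R) \<beta> = mult_x_minus_y (bimonom n m 1)"
    using exp_part_dx_solve_target[OF Suc] by blast
  obtain P Q where PQ: "deg_le P (int k)" "P (0, k) \<noteq> 0" "deg_le Q (int (Suc k))"
    "Q (0, Suc k) = of_nat n / (2 * of_nat (Suc k))" "Q (Suc k, 0) = of_nat m / (2 * of_nat (Suc k))"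
    "exp_part_dy P Q = bimonom n m (- 1 / 2) + R" "pderiv_y Q = \<beta>"
    using exp_part_dy_solve_target[OF Suc R(1-4)] by blast
  have "Q (0, Suc k) \<noteq> 0 \<or> Q (Suc k, 0) \<noteq> 0"
    using Suc PQ(4,5) by auto
  then have "tdeg Q = int (Suc k)"
    using tdeg_eqI[OF PQ(3), of 0 "Suc k"] tdeg_eqI[OF PQ(3), of "Suc k" 0] by auto
  moreover have "tdeg P = int k"
    using PQ(1,2) by (rule tdeg_eqI) simp
  ultimately show ?thesis
    using Suc PQ(1,3,6,7) R(3,5)
    by (intro exI[of _ P] exI[of _ Q]) (simp add: deg_le_imp_bipoly pderiv_x_y_only)
qed

theorem lemma4:
  fixes n m :: nat
  shows "\<exists>p q :: bipoly. bipoly p \<and> bipoly q \<and>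
           tdeg p = int (n + m) - 1 \<and> tdeg q = int (n + m) \<and>
           (\<exists>G :: real \<Rightarrow> real \<Rightarrow> real.
              (\<forall>x y. ((\<lambda>y. bipoly_eval p x y * exp (- ((x - y)^2)) + bipoly_eval q x y * Erf (x - y))
                        has_real_derivative G x y) (at y)) \<and>
              (\<forall>x y. ((\<lambda>x. G x y) has_real_derivative
                        x ^ n * y ^ m * (x - y) * exp (- ((x - y)^2))) (at x)))"
proof -
  obtain P Q where PQ: "bipoly P" "bipoly Q" "tdeg P = int (n + m) - 1" "tdeg Q = int (n + m)"
    and dx: "exp_part_dx (exp_part_dy P Q) (pderiv_y Q) = mult_x_minus_y (bimonom n m 1)"
    and dxy: "pderiv_x (pderiv_y Q) = 0"
    using erf_double_antiderivative_coeffs by blast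
  define G where "G = erf_form (exp_part_dy P Q) (pderiv_y Q)"
  have "((\<lambda>y. erf_form P Q x y) has_real_derivative G x y) (at y)" for x y
    unfolding G_def by (rule erf_form_DERIV_y[OF PQ(1,2)])
  moreover have "((\<lambda>x. G x y) has_real_derivative x ^ n * y ^ m * (x - y) * exp (- ((x - y)^2))) (at x)"
    for x y
    using erf_form_DERIV_x[OF bipoly_exp_part_dy[OF PQ(1,2)] bipoly_pderiv_y[OF PQ(2)], of y x]
    by (simp add: G_def dx dxy erf_form_def bipoly_eval_mult_x_minus_y bipoly_bimonom
        bipoly_eval_bimonom mult_ac)
  ultimately show ?thesis
    using PQ unfolding erf_form_def by blast
qed

end
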